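(* Let $(S,d)$ and $(S',d')$ be Polish spaces and let $g:S'\times S\to\mathbb{R}$ be a (Borel measurable) map that is $K$-Lipschitz in the second variable, i.e. $|g(x,y)-g(x,z)|\le K\,d(y,z)$ for all $x\in S'$, $y,z\in S$. Let $X$ be an $S'$-valued random variable and $Y,Z$ be $S$-valued random variables with $X$ independent of $Y$ and $X$ independent of $Z$, and suppose the cumulative distribution function of $g(X,Y)$ is Lipschitz with constant $L$. Then for all $x\in\mathbb{R}$, $|\mathbb{P}(g(X,Y)\le x)-\mathbb{P}(g(X,Z)\le x)|\le(1+L)(1\vee K)\,\rho_P^S(Y,Z)$.
   Context: For a Polish space $(S,d)$ and $\mu,\nu\in\mathcal{P}(S)$, the Prokhorov distance is $\rho_P^S(\mu,\nu)=\inf\{\epsilon>0:\mu(B)\le\nu(B^\epsilon)+\epsilon\text{ for all Borel sets }B\}$, where $B^\epsilon=\{x\in S:d(x,B)<\epsilon\}$; for $S$-valued random variables $U,V$, $\rho_P^S(U,V)=\rho_P^S(\operatorname{law}(U),\operatorname{law}(V))$. $a\vee b=\max(a,b)$. *)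

theory Defs
  imports "HOL-Probability.Probability"
begin

definition eps_nbhd :: "real \<Rightarrow> 'a::metric_space set \<Rightarrow> 'a set" where
  "eps_nbhd \<epsilon> B = {x. \<exists>b\<in>B. dist x b < \<epsilon>}"

definition prokhorov :: "'a::metric_space measure \<Rightarrow> 'a measure \<Rightarrow> real" where
  "prokhorov \<mu> \<nu> = Inf {\<epsilon>. \<epsilon> > 0 \<and>
      (\<forall>B \<in> sets (borel :: 'a measure). measure \<mu> B \<le> measure \<nu> (eps_nbhd \<epsilon> B) + \<epsilon>)}"

end

theory Submission
  imports Defs
begin

text \<open>Condition on \<open>X = x\<close>. Since \<open>g x\<close> is \<open>K\<close>-Lipschitz, the \<open>\<epsilon>\<close>-neighbourhood of
  \<open>{g x \<le> t - K\<epsilon>}\<close> lies in \<open>{g x \<le> t}\<close>, so for every \<open>\<epsilon>\<close> above the Prokhorov distance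
  \<open>P(g(x,Y) \<le> t - K\<epsilon>) \<le> P(g(x,Z) \<le> t) + \<epsilon>\<close>, and symmetrically for the upper tails.
  Independence makes the joint laws product measures, so these bounds integrate over the law of
  \<open>X\<close> (Fubini). The Lipschitz distribution function \<open>F\<close> of \<open>g(X,Y)\<close> absorbs the shift
  \<open>K\<epsilon>\<close> at cost \<open>LK\<epsilon>\<close>, giving \<open>|F t - P(g(X,Z) \<le> t)| \<le> (1 + LK)\<epsilon>\<close>; now let \<open>\<epsilon>\<close>
  decrease to the Prokhorov distance and note \<open>1 + LK \<le> (1 + L) max 1 K\<close>.\<close>

definition prokhorov_radii :: "'a::metric_space measure \<Rightarrow> 'a measure \<Rightarrow> real set" where
  "prokhorov_radii \<mu> \<nu> = {\<epsilon>. \<epsilon> > 0 \<and>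
      (\<forall>B \<in> sets (borel :: 'a measure). measure \<mu> B \<le> measure \<nu> (eps_nbhd \<epsilon> B) + \<epsilon>)}"

lemma prokhorov_eq_Inf_radii: "prokhorov \<mu> \<nu> = Inf (prokhorov_radii \<mu> \<nu>)"
  unfolding prokhorov_def prokhorov_radii_def ..

lemma one_in_prokhorov_radii: "prob_space \<mu> \<Longrightarrow> 1 \<in> prokhorov_radii \<mu> \<nu>"
  unfolding prokhorov_radii_def by (auto intro: add_increasing prob_space.prob_le_1)

lemma eps_nbhd_eq_UN_ball: "eps_nbhd \<epsilon> B = (\<Union>b\<in>B. ball b \<epsilon>)"
  by (auto simp: eps_nbhd_def dist_commute)

lemma sets_eps_nbhd [measurable]: "eps_nbhd \<epsilon> B \<in> sets borel"
  unfolding eps_nbhd_eq_UN_ball by (intro borel_open open_UN) simp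

lemma eps_nbhd_mono: "\<epsilon> \<le> \<delta> \<Longrightarrow> eps_nbhd \<epsilon> B \<subseteq> eps_nbhd \<delta> B"
  unfolding eps_nbhd_def by (blast intro: less_le_trans)

lemma prokhorov_nonneg:
  assumes "prob_space \<mu>"
  shows "0 \<le> prokhorov \<mu> \<nu>"
  unfolding prokhorov_eq_Inf_radii
proof (rule cInf_greatest)
  show "prokhorov_radii \<mu> \<nu> \<noteq> {}"
    using one_in_prokhorov_radii[OF assms] by blast
qed (simp add: prokhorov_radii_def)

lemma prokhorov_less_imp_le:
  assumes "prob_space \<mu>" "finite_measure \<nu>" "sets \<nu> = sets borel"
    and "prokhorov \<mu> \<nu> < \<epsilon>" "B \<in> sets borel"
  shows "measure \<mu> B \<le> measure \<nu> (eps_nbhd \<epsilon> B) + \<epsilon>"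
proof -
  obtain \<delta> where \<delta>: "\<delta> \<in> prokhorov_radii \<mu> \<nu>" "\<delta> < \<epsilon>"
    using cInf_lessD one_in_prokhorov_radii[OF assms(1)] assms(4)
    unfolding prokhorov_eq_Inf_radii by blast
  then have "measure \<mu> B \<le> measure \<nu> (eps_nbhd \<delta> B) + \<delta>"
    using assms(5) by (simp add: prokhorov_radii_def)
  also have "measure \<nu> (eps_nbhd \<delta> B) \<le> measure \<nu> (eps_nbhd \<epsilon> B)"
    using \<delta>(2) assms(2,3) by (intro finite_measure.finite_measure_mono eps_nbhd_mono) auto
  finally show ?thesis
    using \<delta>(2) by simp
qed

lemma eps_nbhd_sublevel_subset:
  fixes f :: "'a::metric_space \<Rightarrow> real"
  assumes "K-lipschitz_on UNIV f"
  shows "eps_nbhd \<epsilon> {y. f y \<le> c - K * \<epsilon>} \<subseteq> {y. f y \<le> c}"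
proof
  fix y assume "y \<in> eps_nbhd \<epsilon> {y. f y \<le> c - K * \<epsilon>}"
  then obtain b where "f b \<le> c - K * \<epsilon>" "dist y b < \<epsilon>"
    by (auto simp: eps_nbhd_def)
  moreover have "f y \<le> f b + K * dist y b"
    using lipschitz_onD[OF assms, of y b] by (simp add: dist_real_def abs_le_iff)
  moreover have "K * dist y b \<le> K * \<epsilon>"
    using \<open>dist y b < \<epsilon>\<close> lipschitz_on_nonneg[OF assms] by (simp add: mult_left_mono)
  ultimately show "y \<in> {y. f y \<le> c}"
    by simp
qed

lemma eps_nbhd_superlevel_subset:
  fixes f :: "'a::metric_space \<Rightarrow> real"
  assumes "K-lipschitz_on UNIV f"
  shows "eps_nbhd \<epsilon> {y. c + K * \<epsilon> < f y} \<subseteq> {y. c < f y}"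
proof
  fix y assume "y \<in> eps_nbhd \<epsilon> {y. c + K * \<epsilon> < f y}"
  then obtain b where "c + K * \<epsilon> < f b" "dist y b < \<epsilon>"
    by (auto simp: eps_nbhd_def)
  moreover have "f b \<le> f y + K * dist y b"
    using lipschitz_onD[OF assms, of y b] by (simp add: dist_real_def abs_le_iff)
  moreover have "K * dist y b \<le> K * \<epsilon>"
    using \<open>dist y b < \<epsilon>\<close> lipschitz_on_nonneg[OF assms] by (simp add: mult_left_mono)
  ultimately show "y \<in> {y. c < f y}"
    by simp
qed

lemma lipschitz_on_UNIV_borel_measurable:
  "K-lipschitz_on UNIV f \<Longrightarrow> f \<in> borel_measurable borel"
  by (intro borel_measurable_continuous_onI lipschitz_on_continuous_on)

lemma prokhorov_less_imp_sublevel_le: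
  fixes f :: "'a::metric_space \<Rightarrow> real"
  assumes "prob_space \<mu>" "finite_measure \<nu>" "sets \<nu> = sets borel"
    and "K-lipschitz_on UNIV f" "prokhorov \<mu> \<nu> < \<epsilon>"
  shows "measure \<mu> {y. f y \<le> c - K * \<epsilon>} \<le> measure \<nu> {y. f y \<le> c} + \<epsilon>"
proof -
  note f_borel [measurable] = lipschitz_on_UNIV_borel_measurable[OF assms(4)]
  have "measure \<mu> {y. f y \<le> c - K * \<epsilon>} \<le> measure \<nu> (eps_nbhd \<epsilon> {y. f y \<le> c - K * \<epsilon>}) + \<epsilon>"
    using assms by (intro prokhorov_less_imp_le) auto
  also have "measure \<nu> (eps_nbhd \<epsilon> {y. f y \<le> c - K * \<epsilon>}) \<le> measure \<nu> {y. f y \<le> c}"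
    using assms by (intro finite_measure.finite_measure_mono eps_nbhd_sublevel_subset) auto
  finally show ?thesis
    by simp
qed

lemma prokhorov_less_imp_superlevel_le:
  fixes f :: "'a::metric_space \<Rightarrow> real"
  assumes "prob_space \<mu>" "finite_measure \<nu>" "sets \<nu> = sets borel"
    and "K-lipschitz_on UNIV f" "prokhorov \<mu> \<nu> < \<epsilon>"
  shows "measure \<mu> {y. c + K * \<epsilon> < f y} \<le> measure \<nu> {y. c < f y} + \<epsilon>"
proof -
  note f_borel [measurable] = lipschitz_on_UNIV_borel_measurable[OF assms(4)]
  have "measure \<mu> {y. c + K * \<epsilon> < f y} \<le> measure \<nu> (eps_nbhd \<epsilon> {y. c + K * \<epsilon> < f y}) + \<epsilon>"
    using assms by (intro prokhorov_less_imp_le) auto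
  also have "measure \<nu> (eps_nbhd \<epsilon> {y. c + K * \<epsilon> < f y}) \<le> measure \<nu> {y. c < f y}"
    using assms by (intro finite_measure.finite_measure_mono eps_nbhd_superlevel_subset) auto
  finally show ?thesis
    by simp
qed

lemma measure_pair_measure_le_if_sections_le:
  assumes "prob_space P" "prob_space Q" "prob_space R"
    and S: "S \<in> sets (P \<Otimes>\<^sub>M Q)" and T: "T \<in> sets (P \<Otimes>\<^sub>M R)" and "0 \<le> e"
    and sections: "\<And>x. x \<in> space P \<Longrightarrow> measure Q (Pair x -` S) \<le> measure R (Pair x -` T) + e"
  shows "measure (P \<Otimes>\<^sub>M Q) S \<le> measure (P \<Otimes>\<^sub>M R) T + e"
proof -
  interpret P: prob_space P by fact
  interpret Q: prob_space Q by fact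
  interpret R: prob_space R by fact
  interpret PQ: pair_prob_space P Q ..
  interpret PR: pair_prob_space P R ..
  have "emeasure (P \<Otimes>\<^sub>M Q) S = (\<integral>\<^sup>+x. emeasure Q (Pair x -` S) \<partial>P)"
    using S by (rule Q.emeasure_pair_measure_alt)
  also have "\<dots> \<le> (\<integral>\<^sup>+x. emeasure R (Pair x -` T) + e \<partial>P)"
    using sections \<open>0 \<le> e\<close>
    by (intro nn_integral_mono) (simp add: Q.emeasure_eq_measure R.emeasure_eq_measure flip: ennreal_plus)
  also have "\<dots> = (\<integral>\<^sup>+x. emeasure R (Pair x -` T) \<partial>P) + e"
    using T by (simp add: nn_integral_add PR.measurable_emeasure_Pair1 P.emeasure_space_1)
  also have "\<dots> = emeasure (P \<Otimes>\<^sub>M R) T + e"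
    using T by (simp add: R.emeasure_pair_measure_alt)
  finally show ?thesis
    using \<open>0 \<le> e\<close> by (simp add: PQ.emeasure_eq_measure PR.emeasure_eq_measure flip: ennreal_plus)
qed

text \<open>The library's \<open>indep_var\<close> requires both random variables to have the same codomain
  type, so independence of \<open>X\<close> and \<open>Y\<close> is expressed through their generated \<open>\<sigma>\<close>-algebras.\<close>

abbreviation (in prob_space) indep_rvs
  :: "'b measure \<Rightarrow> ('a \<Rightarrow> 'b) \<Rightarrow> 'c measure \<Rightarrow> ('a \<Rightarrow> 'c) \<Rightarrow> bool" where
  "indep_rvs MX X MY Y \<equiv>
    indep_set {X -` A \<inter> space M | A. A \<in> sets MX} {Y -` B \<inter> space M | B. B \<in> sets MY}"

lemma (in prob_space) pair_measure_distr_eq_distr_Pair: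
  assumes X: "random_variable MX X" and Y: "random_variable MY Y" and indep: "indep_rvs MX X MY Y"
  shows "distr M MX X \<Otimes>\<^sub>M distr M MY Y = distr M (MX \<Otimes>\<^sub>M MY) (\<lambda>\<omega>. (X \<omega>, Y \<omega>))"
proof (rule pair_measure_eqI)
  interpret PX: prob_space "distr M MX X" using X by (rule prob_space_distr)
  interpret PY: prob_space "distr M MY Y" using Y by (rule prob_space_distr)
  show "sigma_finite_measure (distr M MX X)" "sigma_finite_measure (distr M MY Y)"
    by unfold_locales
  fix A B assume A: "A \<in> sets (distr M MX X)" and B: "B \<in> sets (distr M MY Y)"
  have "emeasure (distr M (MX \<Otimes>\<^sub>M MY) (\<lambda>\<omega>. (X \<omega>, Y \<omega>))) (A \<times> B)
      = ennreal (prob ((X -` A \<inter> space M) \<inter> (Y -` B \<inter> space M)))"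
    using A B X Y by (auto simp: emeasure_distr emeasure_eq_measure intro!: arg_cong[where f=prob])
  also have "prob ((X -` A \<inter> space M) \<inter> (Y -` B \<inter> space M))
      = prob (X -` A \<inter> space M) * prob (Y -` B \<inter> space M)"
    using A B by (intro indep_setD[OF indep]) auto
  also have "ennreal \<dots> = emeasure (distr M MX X) A * emeasure (distr M MY Y) B"
    using A B X Y by (simp add: emeasure_distr emeasure_eq_measure ennreal_mult)
  finally show "emeasure (distr M MX X) A * emeasure (distr M MY Y) B =
      emeasure (distr M (MX \<Otimes>\<^sub>M MY) (\<lambda>\<omega>. (X \<omega>, Y \<omega>))) (A \<times> B)" ..
qed simp

lemma (in prob_space) prob_le_if_sections_le:
  assumes X [measurable]: "random_variable MX X"
    and Y [measurable]: "random_variable MY Y" and Z [measurable]: "random_variable MY Z"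
    and "indep_rvs MX X MY Y" "indep_rvs MX X MY Z"
    and [measurable]: "Measurable.pred (MX \<Otimes>\<^sub>M MY) (\<lambda>(x, y). P x y)"
      "Measurable.pred (MX \<Otimes>\<^sub>M MY) (\<lambda>(x, y). Q x y)"
    and "0 \<le> e"
    and sections: "\<And>x. x \<in> space MX \<Longrightarrow> measure (distr M MY Y) {y \<in> space MY. P x y}
      \<le> measure (distr M MY Z) {y \<in> space MY. Q x y} + e"
  shows "prob {\<omega> \<in> space M. P (X \<omega>) (Y \<omega>)} \<le> prob {\<omega> \<in> space M. Q (X \<omega>) (Z \<omega>)} + e"
proof -
  let ?S = "{p \<in> space (MX \<Otimes>\<^sub>M MY). P (fst p) (snd p)}"
    and ?T = "{p \<in> space (MX \<Otimes>\<^sub>M MY). Q (fst p) (snd p)}"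
  have XY: "distr M MX X \<Otimes>\<^sub>M distr M MY Y = distr M (MX \<Otimes>\<^sub>M MY) (\<lambda>\<omega>. (X \<omega>, Y \<omega>))"
    and XZ: "distr M MX X \<Otimes>\<^sub>M distr M MY Z = distr M (MX \<Otimes>\<^sub>M MY) (\<lambda>\<omega>. (X \<omega>, Z \<omega>))"
    using assms by (simp_all add: pair_measure_distr_eq_distr_Pair)
  have "prob {\<omega> \<in> space M. P (X \<omega>) (Y \<omega>)} = measure (distr M MX X \<Otimes>\<^sub>M distr M MY Y) ?S"
    using measurable_space[OF X] measurable_space[OF Y]
    by (auto simp: XY measure_distr space_pair_measure intro!: arg_cong[where f=prob])
  also have "\<dots> \<le> measure (distr M MX X \<Otimes>\<^sub>M distr M MY Z) ?T + e"
  proof (rule measure_pair_measure_le_if_sections_le)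
    fix x assume "x \<in> space (distr M MX X)"
    then show "measure (distr M MY Y) (Pair x -` ?S) \<le> measure (distr M MY Z) (Pair x -` ?T) + e"
      using sections[of x] by (simp add: space_pair_measure vimage_def)
  qed (use \<open>0 \<le> e\<close> in \<open>auto intro: prob_space_distr\<close>)
  also have "measure (distr M MX X \<Otimes>\<^sub>M distr M MY Z) ?T = prob {\<omega> \<in> space M. Q (X \<omega>) (Z \<omega>)}"
    using measurable_space[OF X] measurable_space[OF Z]
    by (auto simp: XZ measure_distr space_pair_measure intro!: arg_cong[where f=prob])
  finally show ?thesis .
qed

locale indep_lipschitz_comparison = prob_space M for M :: "'w measure" +
  fixes MX :: "'b measure" and X :: "'w \<Rightarrow> 'b" and Y Z :: "'w \<Rightarrow> 'a::metric_space"
    and g :: "'b \<Rightarrow> 'a \<Rightarrow> real" and K :: real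
  assumes X [measurable]: "random_variable MX X"
    and Y [measurable]: "random_variable borel Y" and Z [measurable]: "random_variable borel Z"
    and indep_XY: "indep_rvs MX X borel Y" and indep_XZ: "indep_rvs MX X borel Z"
    and g [measurable]: "(\<lambda>(x, y). g x y) \<in> borel_measurable (MX \<Otimes>\<^sub>M borel)"
    and g_lipschitz: "\<And>x. K-lipschitz_on UNIV (g x)"
begin

lemma prob_space_distr_Y: "prob_space (distr M borel Y)"
  and finite_measure_distr_Z: "finite_measure (distr M borel Z)"
  by (simp_all add: prob_space_distr prob_space.finite_measure)

lemma prob_sublevel_le_if_prokhorov_less:
  assumes \<epsilon>: "prokhorov (distr M borel Y) (distr M borel Z) < \<epsilon>"
  shows "prob {\<omega> \<in> space M. g (X \<omega>) (Y \<omega>) \<le> c - K * \<epsilon>}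
    \<le> prob {\<omega> \<in> space M. g (X \<omega>) (Z \<omega>) \<le> c} + \<epsilon>"
proof -
  have "0 \<le> \<epsilon>"
    using prokhorov_nonneg[OF prob_space_distr_Y, of "distr M borel Z"] \<epsilon> by linarith
  moreover have "measure (distr M borel Y) {y. g x y \<le> c - K * \<epsilon>}
      \<le> measure (distr M borel Z) {y. g x y \<le> c} + \<epsilon>" for x
    using prob_space_distr_Y finite_measure_distr_Z g_lipschitz \<epsilon>
    by (intro prokhorov_less_imp_sublevel_le) auto
  ultimately show ?thesis
    by (intro prob_le_if_sections_le[OF X Y Z indep_XY indep_XZ]) auto
qed

lemma prob_superlevel_le_if_prokhorov_less:
  assumes \<epsilon>: "prokhorov (distr M borel Y) (distr M borel Z) < \<epsilon>"
  shows "prob {\<omega> \<in> space M. c + K * \<epsilon> < g (X \<omega>) (Y \<omega>)}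
    \<le> prob {\<omega> \<in> space M. c < g (X \<omega>) (Z \<omega>)} + \<epsilon>"
proof -
  have "0 \<le> \<epsilon>"
    using prokhorov_nonneg[OF prob_space_distr_Y, of "distr M borel Z"] \<epsilon> by linarith
  moreover have "measure (distr M borel Y) {y. c + K * \<epsilon> < g x y}
      \<le> measure (distr M borel Z) {y. c < g x y} + \<epsilon>" for x
    using prob_space_distr_Y finite_measure_distr_Z g_lipschitz \<epsilon>
    by (intro prokhorov_less_imp_superlevel_le) auto
  ultimately show ?thesis
    by (intro prob_le_if_sections_le[OF X Y Z indep_XY indep_XZ]) auto
qed

lemma prob_le_diff_le_prokhorov:
  assumes F_lipschitz: "L-lipschitz_on UNIV (\<lambda>t. prob {\<omega> \<in> space M. g (X \<omega>) (Y \<omega>) \<le> t})"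
  shows "\<bar>prob {\<omega> \<in> space M. g (X \<omega>) (Y \<omega>) \<le> c} - prob {\<omega> \<in> space M. g (X \<omega>) (Z \<omega>) \<le> c}\<bar>
    \<le> (1 + L * K) * prokhorov (distr M borel Y) (distr M borel Z)"
    (is "\<bar>?F c - ?Q c\<bar> \<le> (1 + L * K) * ?\<rho>")
proof -
  have "0 \<le> K" "0 \<le> L"
    using g_lipschitz F_lipschitz lipschitz_on_nonneg by blast+
  have F_le: "?F s \<le> ?F t + L * \<bar>s - t\<bar>" for s t
    using lipschitz_onD[OF F_lipschitz, of s t] by (simp add: dist_real_def abs_le_iff)
  have prob_greater: "prob {\<omega> \<in> space M. t < V \<omega>} = 1 - prob {\<omega> \<in> space M. V \<omega> \<le> t}"
    if [measurable]: "random_variable borel V" for V :: "'w \<Rightarrow> real" and t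
    using prob_neg[of "\<lambda>\<omega>. V \<omega> \<le> t"] by (simp add: not_le)
  have bound: "\<bar>?F c - ?Q c\<bar> \<le> (1 + L * K) * \<epsilon>" if \<epsilon>: "?\<rho> < \<epsilon>" for \<epsilon>
  proof -
    have "0 \<le> \<epsilon>"
      using prokhorov_nonneg[OF prob_space_distr_Y, of "distr M borel Z"] \<epsilon> by linarith
    have "?F (c - K * \<epsilon>) \<le> ?Q c + \<epsilon>"
      using prob_sublevel_le_if_prokhorov_less[OF \<epsilon>] .
    moreover have "1 - ?F (c + K * \<epsilon>) \<le> 1 - ?Q c + \<epsilon>"
      using prob_superlevel_le_if_prokhorov_less[OF \<epsilon>] by (simp add: prob_greater)
    moreover have "?F c \<le> ?F (c - K * \<epsilon>) + L * (K * \<epsilon>)" "?F (c + K * \<epsilon>) \<le> ?F c + L * (K * \<epsilon>)"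
      using F_le[of c "c - K * \<epsilon>"] F_le[of "c + K * \<epsilon>" c] \<open>0 \<le> K\<close> \<open>0 \<le> \<epsilon>\<close> by simp_all
    ultimately show ?thesis
      by (simp add: abs_le_iff algebra_simps)
  qed
  have "0 < 1 + L * K"
    using \<open>0 \<le> K\<close> \<open>0 \<le> L\<close> by (simp add: add_pos_nonneg)
  show ?thesis
  proof (rule dense_ge)
    fix y assume "(1 + L * K) * ?\<rho> < y"
    with \<open>0 < 1 + L * K\<close> have "?\<rho> < y / (1 + L * K)"
      by (simp add: field_simps)
    from bound[OF this] \<open>0 < 1 + L * K\<close> show "\<bar>?F c - ?Q c\<bar> \<le> y"
      by simp
  qed
qed

end

theorem corollary3p8:
  fixes M :: "'w measure"
    and g :: "'b::polish_space \<Rightarrow> 'a::polish_space \<Rightarrow> real"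
    and X :: "'w \<Rightarrow> 'b" and Y Z :: "'w \<Rightarrow> 'a"
    and K L :: real
  assumes "prob_space M"
    and g_meas: "(\<lambda>(x, y). g x y) \<in> borel_measurable (borel \<Otimes>\<^sub>M borel)"
    and g_lip: "\<forall>x. K-lipschitz_on UNIV (g x)"
    and X_rv: "X \<in> measurable M borel"
    and Y_rv: "Y \<in> measurable M borel"
    and Z_rv: "Z \<in> measurable M borel"
    and indep_XY: "prob_space.indep_set M {X -` A \<inter> space M | A. A \<in> sets borel}
                     {Y -` B \<inter> space M | B. B \<in> sets borel}"
    and indep_XZ: "prob_space.indep_set M {X -` A \<inter> space M | A. A \<in> sets borel}
                     {Z -` B \<inter> space M | B. B \<in> sets borel}"
    and cdf_lip: "L-lipschitz_on UNIV (cdf (distr M borel (\<lambda>\<omega>. g (X \<omega>) (Y \<omega>))))"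
  shows "\<forall>x::real. \<bar>measure M {\<omega> \<in> space M. g (X \<omega>) (Y \<omega>) \<le> x}
                    - measure M {\<omega> \<in> space M. g (X \<omega>) (Z \<omega>) \<le> x}\<bar>
           \<le> (1 + L) * max 1 K * prokhorov (distr M borel Y) (distr M borel Z)"
proof
  fix x :: real
  interpret indep_lipschitz_comparison M borel X Y Z g K
    using assms by (intro indep_lipschitz_comparison.intro indep_lipschitz_comparison_axioms.intro) simp_all
  have "cdf (distr M borel (\<lambda>\<omega>. g (X \<omega>) (Y \<omega>))) = (\<lambda>t. prob {\<omega> \<in> space M. g (X \<omega>) (Y \<omega>) \<le> t})"
    by (auto simp: cdf_def measure_distr vimage_def Int_def conj_commute)
  then have "\<bar>prob {\<omega> \<in> space M. g (X \<omega>) (Y \<omega>) \<le> x} - prob {\<omega> \<in> space M. g (X \<omega>) (Z \<omega>) \<le> x}\<bar>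
      \<le> (1 + L * K) * prokhorov (distr M borel Y) (distr M borel Z)"
    using cdf_lip by (intro prob_le_diff_le_prokhorov) simp
  also have "\<dots> \<le> (1 + L) * max 1 K * prokhorov (distr M borel Y) (distr M borel Z)"
  proof (rule mult_right_mono)
    have "0 \<le> L"
      using cdf_lip lipschitz_on_nonneg by blast
    then have "L * K \<le> L * max 1 K"
      by (simp add: mult_left_mono)
    then show "1 + L * K \<le> (1 + L) * max 1 K"
      by (simp add: algebra_simps)
  qed (rule prokhorov_nonneg[OF prob_space_distr_Y])
  finally show "\<bar>prob {\<omega> \<in> space M. g (X \<omega>) (Y \<omega>) \<le> x} - prob {\<omega> \<in> space M. g (X \<omega>) (Z \<omega>) \<le> x}\<bar>
      \<le> (1 + L) * max 1 K * prokhorov (distr M borel Y) (distr M borel Z)" .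
qed

end
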